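(* The variety $\mathsf{V}(S_{(4,430)})$ is the ai-semiring variety defined by the identities $xy\approx yx$, $x^4\approx x^3$, $x^3\approx x^2+x$, $x+xy\approx x+x^2y$, $x^2+y^2\approx x^2+y^2+xy$, $x_1x_2x_3\approx x_1x_2x_3+x_1x_2x_3x_4$.
   Context: An ai-semiring is an algebra $(S,+,\cdot)$ with $(S,+)$ a semilattice, $(S,\cdot)$ a semigroup, and both distributive laws. $\mathsf{V}(S)$ is the variety generated by $S$; "the ai-semiring variety defined by identities $\Sigma$" is the class of all ai-semirings satisfying $\Sigma$. $S_{(4,430)}$ has carrier $\{1,2,3,4\}$; addition: $x+x=x$, $2+x=x$, $1+x=1$ for all $x$, $3+4=1$; multiplication (row $a$, column $b$ gives $a\cdot b$): row $1$: $1,2,1,1$; row $2$: $2,2,2,2$; row $3$: $1,2,1,1$; row $4$: $1,2,1,3$. *)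

theory Defs
  imports Main
begin

datatype s4 = E1 | E2 | E3 | E4

fun add4 :: "s4 \<Rightarrow> s4 \<Rightarrow> s4" where
  "add4 E1 y = E1"
| "add4 x E1 = E1"
| "add4 E2 y = y"
| "add4 x E2 = x"
| "add4 E3 E3 = E3"
| "add4 E4 E4 = E4"
| "add4 E3 E4 = E1"
| "add4 E4 E3 = E1"

fun mul4 :: "s4 \<Rightarrow> s4 \<Rightarrow> s4" where
  "mul4 E2 y = E2"
| "mul4 x E2 = E2"
| "mul4 E4 E4 = E3"
| "mul4 x y = E1"

definition ai_semiring :: "'a set \<Rightarrow> ('a \<Rightarrow> 'a \<Rightarrow> 'a) \<Rightarrow> ('a \<Rightarrow> 'a \<Rightarrow> 'a) \<Rightarrow> bool" where
  "ai_semiring A p m \<longleftrightarrow>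
     (\<forall>x\<in>A. \<forall>y\<in>A. p x y \<in> A \<and> m x y \<in> A) \<and>
     (\<forall>x\<in>A. \<forall>y\<in>A. \<forall>z\<in>A. p (p x y) z = p x (p y z)) \<and>
     (\<forall>x\<in>A. \<forall>y\<in>A. p x y = p y x) \<and>
     (\<forall>x\<in>A. p x x = x) \<and>
     (\<forall>x\<in>A. \<forall>y\<in>A. \<forall>z\<in>A. m (m x y) z = m x (m y z)) \<and>
     (\<forall>x\<in>A. \<forall>y\<in>A. \<forall>z\<in>A. m x (p y z) = p (m x y) (m x z)) \<and>
     (\<forall>x\<in>A. \<forall>y\<in>A. \<forall>z\<in>A. m (p x y) z = p (m x z) (m y z))"

definition satisfies_Sigma :: "'a set \<Rightarrow> ('a \<Rightarrow> 'a \<Rightarrow> 'a) \<Rightarrow> ('a \<Rightarrow> 'a \<Rightarrow> 'a) \<Rightarrow> bool" where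
  "satisfies_Sigma A p m \<longleftrightarrow>
     (\<forall>x\<in>A. \<forall>y\<in>A. m x y = m y x) \<and>
     (\<forall>x\<in>A. m (m (m x x) x) x = m (m x x) x) \<and>
     (\<forall>x\<in>A. m (m x x) x = p (m x x) x) \<and>
     (\<forall>x\<in>A. \<forall>y\<in>A. p x (m x y) = p x (m (m x x) y)) \<and>
     (\<forall>x\<in>A. \<forall>y\<in>A. p (m x x) (m y y) = p (p (m x x) (m y y)) (m x y)) \<and>
     (\<forall>x1\<in>A. \<forall>x2\<in>A. \<forall>x3\<in>A. \<forall>x4\<in>A.
        m (m x1 x2) x3 = p (m (m x1 x2) x3) (m (m (m x1 x2) x3) x4))"

text \<open>A belongs to HSP(S) iff it is a homomorphic image of a subalgebra of a direct
  power of S.  For an algebra on type 'a, the power S^J with J the set of all maps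
  'a => S suffices (the relatively free algebra on |A| generators embeds in it),
  so we fix that index set.\<close>
definition in_V_S4 :: "'a set \<Rightarrow> ('a \<Rightarrow> 'a \<Rightarrow> 'a) \<Rightarrow> ('a \<Rightarrow> 'a \<Rightarrow> 'a) \<Rightarrow> bool" where
  "in_V_S4 A p m \<longleftrightarrow>
     (\<exists>(B :: (('a \<Rightarrow> s4) \<Rightarrow> s4) set) (h :: (('a \<Rightarrow> s4) \<Rightarrow> s4) \<Rightarrow> 'a).
        (\<forall>f\<in>B. \<forall>g\<in>B. (\<lambda>j. add4 (f j) (g j)) \<in> B \<and> (\<lambda>j. mul4 (f j) (g j)) \<in> B) \<and>
        h ` B = A \<and>
        (\<forall>f\<in>B. \<forall>g\<in>B. h (\<lambda>j. add4 (f j) (g j)) = p (h f) (h g) \<and>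
                      h (\<lambda>j. mul4 (f j) (g j)) = m (h f) (h g)))"

end

(*
  S_(4,430) satisfies the six identities, hence so does every algebra in its variety.

  Conversely, let A be an ai-semiring satisfying them.  In any ai-semiring a term is
  the sum of its monomials, so an identity t = u reduces to inequalities w <= u, one
  for each monomial w of t.  In A multiplication is commutative, and a product of at
  least three letters depends only on the set of its letters and absorbs every further
  factor.  This gives four combinatorial situations in which the product of w lies
  below the sum of at most two monomials of u.  If none of them occurs, a valuation
  into {2, 3, 4} separates w from u in S_(4,430).  Hence A satisfies every identity of
  S_(4,430), and A is then a homomorphic image of the algebra of S_(4,430)-term
  functions over A, which is a subalgebra of a power of S_(4,430).
*)

theory Submission
  imports Defs "HOL-Library.Multiset"
begin

section \<open>Terms and monomials\<close>

datatype 'v tm = Var 'v | Add "'v tm" "'v tm" | Mul "'v tm" "'v tm"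

fun eval_tm :: "('b \<Rightarrow> 'b \<Rightarrow> 'b) \<Rightarrow> ('b \<Rightarrow> 'b \<Rightarrow> 'b) \<Rightarrow> ('v \<Rightarrow> 'b) \<Rightarrow> 'v tm \<Rightarrow> 'b" where
  "eval_tm p m e (Var x) = e x"
| "eval_tm p m e (Add a b) = p (eval_tm p m e a) (eval_tm p m e b)"
| "eval_tm p m e (Mul a b) = m (eval_tm p m e a) (eval_tm p m e b)"

lemma eval_map_tm: "eval_tm p' m' e (map_tm f t) = eval_tm p' m' (e \<circ> f) t"
  by (induction t) simp_all

fun monomials :: "'v tm \<Rightarrow> 'v list list" where
  "monomials (Var x) = [[x]]"
| "monomials (Add a b) = monomials a @ monomials b"
| "monomials (Mul a b) = [u @ w. u \<leftarrow> monomials a, w \<leftarrow> monomials b]"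

lemma monomials_nonempty [simp]: "monomials t \<noteq> []"
  by (induction t) auto

lemma monomial_nonempty: "w \<in> set (monomials t) \<Longrightarrow> w \<noteq> [] \<and> set w \<subseteq> set_tm t"
  by (induction t arbitrary: w) fastforce+

definition identity_holds :: "'b set \<Rightarrow> ('b \<Rightarrow> 'b \<Rightarrow> 'b) \<Rightarrow> ('b \<Rightarrow> 'b \<Rightarrow> 'b) \<Rightarrow> 'v tm \<Rightarrow> 'v tm \<Rightarrow> bool" where
  "identity_holds A p m t u \<longleftrightarrow>
     (\<forall>e. e ` (set_tm t \<union> set_tm u) \<subseteq> A \<longrightarrow> eval_tm p m e t = eval_tm p m e u)"

lemma word_cases:
  assumes "u \<noteq> []"
  obtains x where "u = [x]" | x y where "u = [x, y]" | "3 \<le> length u"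
proof -
  have "length u \<noteq> 0"
    using assms by simp
  then consider "length u = 1" | "length u = 2" | "3 \<le> length u"
    by linarith
  then show ?thesis
    using that by cases (auto simp: length_Suc_conv numeral_2_eq_2)
qed

text \<open>\<open>fold1 f []\<close> is left unspecified; it is only ever applied to nonempty lists.\<close>

fun fold1 :: "('b \<Rightarrow> 'b \<Rightarrow> 'b) \<Rightarrow> 'b list \<Rightarrow> 'b" where
  "fold1 f [x] = x"
| "fold1 f (x # y # zs) = f x (fold1 f (y # zs))"

lemma fold1_Cons [simp]: "xs \<noteq> [] \<Longrightarrow> fold1 f (x # xs) = f x (fold1 f xs)"
  by (cases xs) auto

lemma fold1_closed:
  assumes "\<forall>x\<in>A. \<forall>y\<in>A. f x y \<in> A" and "xs \<noteq> []" and "set xs \<subseteq> A"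
  shows "fold1 f xs \<in> A"
  using assms(2,3) by (induction xs rule: induct_list012) (use assms(1) in auto)

lemma fold1_append:
  assumes "\<forall>x\<in>A. \<forall>y\<in>A. f x y \<in> A" and "\<forall>x\<in>A. \<forall>y\<in>A. \<forall>z\<in>A. f (f x y) z = f x (f y z)"
    and "xs \<noteq> []" "ys \<noteq> []" "set xs \<subseteq> A" "set ys \<subseteq> A"
  shows "fold1 f (xs @ ys) = f (fold1 f xs) (fold1 f ys)"
  using assms(3-) by (induction xs rule: induct_list012) (auto simp: assms(2) fold1_closed[OF assms(1)])

locale ai_semiring_on =
  fixes A :: "'b set" and p m :: "'b \<Rightarrow> 'b \<Rightarrow> 'b"
  assumes ai_semiring: "ai_semiring A p m"
begin

lemma add_closed [simp]: "x \<in> A \<Longrightarrow> y \<in> A \<Longrightarrow> p x y \<in> A"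
  and mult_closed [simp]: "x \<in> A \<Longrightarrow> y \<in> A \<Longrightarrow> m x y \<in> A"
  and add_assoc: "x \<in> A \<Longrightarrow> y \<in> A \<Longrightarrow> z \<in> A \<Longrightarrow> p (p x y) z = p x (p y z)"
  and add_commute: "x \<in> A \<Longrightarrow> y \<in> A \<Longrightarrow> p x y = p y x"
  and add_idem [simp]: "x \<in> A \<Longrightarrow> p x x = x"
  and mult_assoc: "x \<in> A \<Longrightarrow> y \<in> A \<Longrightarrow> z \<in> A \<Longrightarrow> m (m x y) z = m x (m y z)"
  and distrib_left: "x \<in> A \<Longrightarrow> y \<in> A \<Longrightarrow> z \<in> A \<Longrightarrow> m x (p y z) = p (m x y) (m x z)"
  and distrib_right: "x \<in> A \<Longrightarrow> y \<in> A \<Longrightarrow> z \<in> A \<Longrightarrow> m (p x y) z = p (m x z) (m y z)"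
  using ai_semiring unfolding ai_semiring_def by blast+

abbreviation leq :: "'b \<Rightarrow> 'b \<Rightarrow> bool" (infix "\<preceq>" 50) where
  "a \<preceq> b \<equiv> p a b = b"

lemma leq_trans: "a \<in> A \<Longrightarrow> b \<in> A \<Longrightarrow> c \<in> A \<Longrightarrow> a \<preceq> b \<Longrightarrow> b \<preceq> c \<Longrightarrow> a \<preceq> c"
  by (metis add_assoc)

lemma leq_antisym: "a \<in> A \<Longrightarrow> b \<in> A \<Longrightarrow> a \<preceq> b \<Longrightarrow> b \<preceq> a \<Longrightarrow> a = b"
  by (metis add_commute)

lemma leq_add_left: "a \<in> A \<Longrightarrow> b \<in> A \<Longrightarrow> a \<preceq> p a b"
  by (metis add_assoc add_idem)

lemma leq_add_right: "a \<in> A \<Longrightarrow> b \<in> A \<Longrightarrow> b \<preceq> p a b"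
  by (metis add_assoc add_commute add_idem)

lemma add_leq: "a \<in> A \<Longrightarrow> b \<in> A \<Longrightarrow> c \<in> A \<Longrightarrow> a \<preceq> c \<Longrightarrow> b \<preceq> c \<Longrightarrow> p a b \<preceq> c"
  by (metis add_assoc)

lemma fold1_add_closed [simp]: "xs \<noteq> [] \<Longrightarrow> set xs \<subseteq> A \<Longrightarrow> fold1 p xs \<in> A"
  and fold1_mult_closed [simp]: "xs \<noteq> [] \<Longrightarrow> set xs \<subseteq> A \<Longrightarrow> fold1 m xs \<in> A"
  by (simp_all add: fold1_closed)

lemma fold1_add_append:
  "xs \<noteq> [] \<Longrightarrow> ys \<noteq> [] \<Longrightarrow> set xs \<subseteq> A \<Longrightarrow> set ys \<subseteq> A \<Longrightarrow>
   fold1 p (xs @ ys) = p (fold1 p xs) (fold1 p ys)"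
  by (rule fold1_append) (auto simp: add_assoc)

lemma fold1_mult_append:
  "xs \<noteq> [] \<Longrightarrow> ys \<noteq> [] \<Longrightarrow> set xs \<subseteq> A \<Longrightarrow> set ys \<subseteq> A \<Longrightarrow>
   fold1 m (xs @ ys) = m (fold1 m xs) (fold1 m ys)"
  by (rule fold1_append) (auto simp: mult_assoc)

lemma fold1_add_leq_iff:
  "xs \<noteq> [] \<Longrightarrow> set xs \<subseteq> A \<Longrightarrow> c \<in> A \<Longrightarrow> fold1 p xs \<preceq> c \<longleftrightarrow> (\<forall>x\<in>set xs. x \<preceq> c)"
proof (induction xs rule: induct_list012)
  case (3 x y zs)
  have "x \<in> A" "fold1 p (y # zs) \<in> A"
    using "3.prems" by auto
  then have "p x (fold1 p (y # zs)) \<preceq> c \<longleftrightarrow> x \<preceq> c \<and> fold1 p (y # zs) \<preceq> c"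
    using \<open>c \<in> A\<close> by (metis add_leq leq_add_left leq_add_right leq_trans add_closed)
  then show ?case
    using "3" by simp
qed auto

lemma leq_fold1_add: "x \<in> set xs \<Longrightarrow> set xs \<subseteq> A \<Longrightarrow> x \<preceq> fold1 p xs"
  using fold1_add_leq_iff[of xs "fold1 p xs"] by (cases xs) auto

lemma mult_fold1_add_right:
  "ys \<noteq> [] \<Longrightarrow> set ys \<subseteq> A \<Longrightarrow> x \<in> A \<Longrightarrow> m x (fold1 p ys) = fold1 p (map (m x) ys)"
  by (induction ys rule: induct_list012) (auto simp: distrib_left)

lemma mult_fold1_add:
  assumes "xs \<noteq> []" "ys \<noteq> []" "set xs \<subseteq> A" "set ys \<subseteq> A"
  shows "m (fold1 p xs) (fold1 p ys) = fold1 p [m x y. x \<leftarrow> xs, y \<leftarrow> ys]"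
  using assms
proof (induction xs rule: induct_list012)
  case (3 x x' xs)
  have "m (fold1 p (x # x' # xs)) (fold1 p ys) = p (m x (fold1 p ys)) (m (fold1 p (x' # xs)) (fold1 p ys))"
    using "3.prems" by (simp add: distrib_right)
  also have "\<dots> = p (fold1 p (map (m x) ys)) (fold1 p [m x y. x \<leftarrow> x' # xs, y \<leftarrow> ys])"
    using 3 by (simp add: mult_fold1_add_right)
  also have "\<dots> = fold1 p (map (m x) ys @ [m x y. x \<leftarrow> x' # xs, y \<leftarrow> ys])"
    using "3.prems" by (intro fold1_add_append[symmetric]) (auto intro: mult_closed)
  finally show ?case by simp
qed (auto simp: mult_fold1_add_right)

lemma eval_closed: "e ` set_tm t \<subseteq> A \<Longrightarrow> eval_tm p m e t \<in> A"
  by (induction t) (simp_all add: image_Un)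

lemma monomial_value_closed:
  "e ` set_tm t \<subseteq> A \<Longrightarrow> w \<in> set (monomials t) \<Longrightarrow> fold1 m (map e w) \<in> A"
  using monomial_nonempty[of w t] by (intro fold1_mult_closed) auto

lemma eval_eq_sum_of_monomials:
  assumes "e ` set_tm t \<subseteq> A"
  shows "eval_tm p m e t = fold1 p (map (\<lambda>w. fold1 m (map e w)) (monomials t))"
  using assms
proof (induction t)
  case (Add a b)
  let ?val = "\<lambda>w. fold1 m (map e w)"
  have "set (map ?val (monomials a)) \<subseteq> A" "set (map ?val (monomials b)) \<subseteq> A"
    using Add.prems monomial_value_closed by (auto simp: image_Un)
  then show ?case
    using Add fold1_add_append[of "map ?val (monomials a)" "map ?val (monomials b)"]
    by (simp add: image_Un)
next
  case (Mul a b)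
  let ?val = "\<lambda>w. fold1 m (map e w)"
  have "set (map ?val (monomials a)) \<subseteq> A" "set (map ?val (monomials b)) \<subseteq> A"
    using Mul.prems monomial_value_closed by (auto simp: image_Un)
  moreover have "?val (u @ w) = m (?val u) (?val w)"
    if "u \<in> set (monomials a)" "w \<in> set (monomials b)" for u w
  proof -
    have "u \<noteq> []" "w \<noteq> []" "e ` set u \<subseteq> A" "e ` set w \<subseteq> A"
      using that Mul.prems monomial_nonempty[of u a] monomial_nonempty[of w b] by auto
    then show ?thesis
      using fold1_mult_append[of "map e u" "map e w"] by simp
  qed
  then have "map ?val (monomials (Mul a b)) =
    [m x y. x \<leftarrow> map ?val (monomials a), y \<leftarrow> map ?val (monomials b)]"
    by (simp add: map_concat del: map_append cong: map_cong)
  ultimately show ?case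
    using Mul by (simp add: image_Un mult_fold1_add)
qed simp

lemma monomial_leq_eval:
  "e ` set_tm t \<subseteq> A \<Longrightarrow> w \<in> set (monomials t) \<Longrightarrow> fold1 m (map e w) \<preceq> eval_tm p m e t"
  unfolding eval_eq_sum_of_monomials by (rule leq_fold1_add) (auto intro: monomial_value_closed)

lemma eval_leq_iff:
  "e ` set_tm t \<subseteq> A \<Longrightarrow> c \<in> A \<Longrightarrow>
   eval_tm p m e t \<preceq> c \<longleftrightarrow> (\<forall>w\<in>set (monomials t). fold1 m (map e w) \<preceq> c)"
  unfolding eval_eq_sum_of_monomials
  by (subst fold1_add_leq_iff) (auto intro: monomial_value_closed)

end

interpretation S: ai_semiring_on "UNIV :: s4 set" add4 mul4
proof (rule ai_semiring_on.intro)
  have s4_laws: "add4 (add4 x y) z = add4 x (add4 y z)" "add4 x y = add4 y x" "add4 x x = x"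
    "mul4 (mul4 x y) z = mul4 x (mul4 y z)" "mul4 x (add4 y z) = add4 (mul4 x y) (mul4 x z)"
    "mul4 (add4 x y) z = add4 (mul4 x z) (mul4 y z)" for x y z
    by (cases x; cases y; cases z; simp)+
  show "ai_semiring UNIV add4 mul4"
    unfolding ai_semiring_def by (intro conjI ballI UNIV_I) (rule s4_laws)+
qed

lemma mul4_E2_right [simp]: "mul4 x E2 = E2"
  by (cases x) simp_all

lemma add4_E2_left [simp]: "add4 E2 x = x"
  by (cases x) simp_all

lemma fold1_mul4_E2: "z \<in> set u \<Longrightarrow> v z = E2 \<Longrightarrow> fold1 mul4 (map v u) = E2"
  by (induction u rule: induct_list012) auto

lemma fold1_mul4_outside:
  assumes "\<not> set u \<subseteq> B" and "\<And>z. z \<notin> B \<Longrightarrow> v z = E2"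
  shows "fold1 mul4 (map v u) = E2"
proof -
  obtain z where "z \<in> set u" "z \<notin> B"
    using assms(1) by blast
  then show ?thesis
    using assms(2) by (intro fold1_mul4_E2) auto
qed

lemma fold1_mul4_long: "3 \<le> length u \<Longrightarrow> E2 \<notin> v ` set u \<Longrightarrow> fold1 mul4 (map v u) = E1"
proof (induction u rule: induct_list012)
  case (3 x y zs)
  then obtain z zs' where zs: "zs = z # zs'"
    by (cases zs) auto
  have "v x \<noteq> E2" "v y \<noteq> E2" "v z \<noteq> E2"
    using "3.prems"(2) zs by auto
  show ?case
  proof (cases "zs' = []")
    case True
    then show ?thesis
      using zs \<open>v x \<noteq> E2\<close> \<open>v y \<noteq> E2\<close> \<open>v z \<noteq> E2\<close>
      by (cases "v x"; cases "v y"; cases "v z") simp_all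
  next
    case False
    then have "fold1 mul4 (map v (y # zs)) = E1"
      using 3 zs by (simp add: Suc_le_eq)
    then show ?thesis
      using \<open>v x \<noteq> E2\<close> by (cases "v x") simp_all
  qed
qed auto

section \<open>Monomials that S_(4,430) forces below a term\<close>

text \<open>Each rule bounds the product of \<open>w\<close> by the sum of at most two members of \<open>M\<close> in every
  algebra satisfying the identities; conversely, S_(4,430) refutes \<open>w \<le> \<Sum>M\<close> whenever
  no rule applies.\<close>

inductive covered :: "'v list set \<Rightarrow> 'v list \<Rightarrow> bool" for M where
  perm: "u \<in> M \<Longrightarrow> mset u = mset w \<Longrightarrow> covered M w"
| long: "u \<in> M \<Longrightarrow> 3 \<le> length u \<Longrightarrow> set u \<subseteq> set w \<Longrightarrow> covered M w"
| linear: "[x] \<in> M \<Longrightarrow> q \<in> M \<Longrightarrow> mset q = {#x, y#} \<Longrightarrow> x \<in> set w \<Longrightarrow> y \<in> set w \<Longrightarrow> covered M w"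
| squares: "[x, x] \<in> M \<Longrightarrow> [y, y] \<in> M \<Longrightarrow> mset w = {#x, y#} \<Longrightarrow> covered M w"

definition S_below :: "'v list \<Rightarrow> 'v tm \<Rightarrow> bool" where
  "S_below w t \<longleftrightarrow>
     (\<forall>v. add4 (fold1 mul4 (map v w)) (eval_tm add4 mul4 v t) = eval_tm add4 mul4 v t)"

text \<open>\<open>E2\<close> is the zero of S_(4,430): it absorbs products and is neutral for sums, so sending the
  letters outside \<open>B\<close> to it discards every monomial that uses one of them.\<close>

lemma S_below_witness:
  assumes "S_below w t" and "add4 (fold1 mul4 (map v w)) c \<noteq> c" and "\<And>z. z \<notin> B \<Longrightarrow> v z = E2"
  obtains u where "u \<in> set (monomials t)" "u \<noteq> []" "set u \<subseteq> B"
    "add4 (fold1 mul4 (map v u)) c \<noteq> c"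
proof -
  have "add4 (eval_tm add4 mul4 v t) c \<noteq> c"
  proof
    assume "add4 (eval_tm add4 mul4 v t) c = c"
    then have "add4 (fold1 mul4 (map v w)) c = c"
      using assms(1) S.leq_trans[of _ "eval_tm add4 mul4 v t" c] unfolding S_below_def by simp
    with assms(2) show False ..
  qed
  then have "\<not> (\<forall>u\<in>set (monomials t). add4 (fold1 mul4 (map v u)) c = c)"
    using S.eval_leq_iff[of v t c] by simp
  then obtain u where u: "u \<in> set (monomials t)" "add4 (fold1 mul4 (map v u)) c \<noteq> c"
    by blast
  moreover have "set u \<subseteq> B"
    using u(2) fold1_mul4_outside[of u B v] assms(3) by (cases "set u \<subseteq> B") auto
  ultimately show ?thesis
    using that monomial_nonempty by blast
qed

lemma covered_singleton:
  assumes "S_below [x] t"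
  shows "covered (set (monomials t)) [x]"
proof -
  define v where "v z = (if z = x then E4 else E2)" for z
  have outside: "\<And>z. z \<notin> {x} \<Longrightarrow> v z = E2"
    by (simp add: v_def)
  have w_above: "add4 (fold1 mul4 (map v [x])) E3 \<noteq> E3"
    by (simp add: v_def)
  obtain u where u: "u \<in> set (monomials t)" "u \<noteq> []" "set u \<subseteq> {x}"
    and above: "add4 (fold1 mul4 (map v u)) E3 \<noteq> E3"
    using S_below_witness[OF assms(1) w_above outside] by blast
  from u(2) show ?thesis
  proof (cases rule: word_cases)
    case (1 z)
    then show ?thesis
      using u by (intro covered.perm[OF u(1)]) simp
  next
    case (2 a b)
    then show ?thesis
      using u above by (simp add: v_def)
  next
    case 3
    then show ?thesis
      using u by (intro covered.long[OF u(1)]) auto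
  qed
qed

lemma covered_double:
  assumes "S_below [x, x] t"
  shows "covered (set (monomials t)) [x, x]"
proof -
  define v where "v z = (if z = x then E4 else E2)" for z
  have outside: "\<And>z. z \<notin> {x} \<Longrightarrow> v z = E2"
    by (simp add: v_def)
  have w_above: "add4 (fold1 mul4 (map v [x, x])) E4 \<noteq> E4"
    by (simp add: v_def)
  obtain u where u: "u \<in> set (monomials t)" "u \<noteq> []" "set u \<subseteq> {x}"
    and above: "add4 (fold1 mul4 (map v u)) E4 \<noteq> E4"
    using S_below_witness[OF assms(1) w_above outside] by blast
  from u(2) show ?thesis
  proof (cases rule: word_cases)
    case (1 z)
    then show ?thesis
      using u above by (simp add: v_def)
  next
    case (2 a b)
    then show ?thesis
      using u by (intro covered.perm[OF u(1)]) simp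
  next
    case 3
    then show ?thesis
      using u by (intro covered.long[OF u(1)]) auto
  qed
qed

lemma covered_pair:
  assumes "S_below [x, y] t" and "x \<noteq> y"
  shows "covered (set (monomials t)) [x, y]"
proof (cases "[x, x] \<in> set (monomials t) \<and> [y, y] \<in> set (monomials t)")
  case True
  then show ?thesis
    by (intro covered.squares[where x = x and y = y]) simp_all
next
  case False
  let ?M = "set (monomials t)"
  define v where "v z = (if z \<in> {x, y} then if [z, z] \<in> ?M then E4 else E3 else E2)" for z
  have outside: "\<And>z. z \<notin> {x, y} \<Longrightarrow> v z = E2"
    by (simp add: v_def)
  have w_above: "add4 (fold1 mul4 (map v [x, y])) E3 \<noteq> E3"
    using False \<open>x \<noteq> y\<close> by (auto simp: v_def)
  obtain u where u: "u \<in> ?M" "u \<noteq> []" "set u \<subseteq> {x, y}"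
    and above: "add4 (fold1 mul4 (map v u)) E3 \<noteq> E3"
    using S_below_witness[OF assms(1) w_above outside] by blast
  from u(2) show ?thesis
  proof (cases rule: word_cases)
    case (1 z)
    then have "[z, z] \<in> ?M"
      using u above by (auto simp: v_def split: if_splits)
    then show ?thesis
      using 1 u by (intro covered.linear[where x = z and q = "[z, z]" and y = z]) auto
  next
    case (2 a b)
    then have "a \<noteq> b"
      using u above by (auto simp: v_def)
    then have "mset u = mset [x, y]"
      using 2 u \<open>x \<noteq> y\<close> by auto
    then show ?thesis
      by (rule covered.perm[OF u(1)])
  next
    case 3
    then show ?thesis
      using u by (intro covered.long[OF u(1)]) auto
  qed
qed

lemma covered_long_word:
  assumes "S_below w t" and "3 \<le> length w"
  shows "covered (set (monomials t)) w"
proof -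
  let ?M = "set (monomials t)"
  define v where "v z = (if z \<notin> set w then E2 else if [z] \<in> ?M then E3 else E4)" for z
  have outside: "\<And>z. z \<notin> set w \<Longrightarrow> v z = E2"
    by (simp add: v_def)
  have "fold1 mul4 (map v w) = E1"
    using assms(2) by (intro fold1_mul4_long) (auto simp: v_def)
  then have w_above: "add4 (fold1 mul4 (map v w)) E3 \<noteq> E3"
    by simp
  obtain u where u: "u \<in> ?M" "u \<noteq> []" "set u \<subseteq> set w"
    and above: "add4 (fold1 mul4 (map v u)) E3 \<noteq> E3"
    using S_below_witness[OF assms(1) w_above outside] by blast
  from u(2) show ?thesis
  proof (cases rule: word_cases)
    case (1 z)
    then show ?thesis
      using u above by (simp add: v_def)
  next
    case (2 a b)
    then have "[a] \<in> ?M \<or> [b] \<in> ?M"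
      using u above by (auto simp: v_def split: if_splits)
    then show ?thesis
      using 2 u covered.linear[where x = a and q = u and y = b] covered.linear[where x = b and q = u and y = a] by auto
  next
    case 3
    then show ?thesis
      using u by (intro covered.long[OF u(1)]) auto
  qed
qed

lemma covered_if_S_below:
  assumes "S_below w t" and "w \<noteq> []"
  shows "covered (set (monomials t)) w"
  using assms(2)
proof (cases rule: word_cases)
  case (2 x y)
  then show ?thesis
    using assms(1) covered_double covered_pair by (cases "x = y") auto
qed (use assms(1) covered_singleton covered_long_word in auto)

section \<open>Ai-semirings satisfying the identities\<close>

locale sigma_semiring = ai_semiring_on +
  assumes sigma: "satisfies_Sigma A p m"
begin

lemma mult_commute: "x \<in> A \<Longrightarrow> y \<in> A \<Longrightarrow> m x y = m y x"
  and cube_eq: "x \<in> A \<Longrightarrow> m (m x x) x = p (m x x) x"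
  and add_mult_eq: "x \<in> A \<Longrightarrow> y \<in> A \<Longrightarrow> p x (m x y) = p x (m (m x x) y)"
  and squares_absorb: "x \<in> A \<Longrightarrow> y \<in> A \<Longrightarrow> p (m x x) (m y y) = p (p (m x x) (m y y)) (m x y)"
  and triple_eq:
    "a \<in> A \<Longrightarrow> b \<in> A \<Longrightarrow> c \<in> A \<Longrightarrow> d \<in> A \<Longrightarrow>
     m (m a b) c = p (m (m a b) c) (m (m (m a b) c) d)"
  using sigma unfolding satisfies_Sigma_def by blast+

lemma triple_absorb:
  "a \<in> A \<Longrightarrow> b \<in> A \<Longrightarrow> c \<in> A \<Longrightarrow> d \<in> A \<Longrightarrow> m (m (m a b) c) d \<preceq> m (m a b) c"
  using triple_eq[of a b c d] add_commute[of "m (m a b) c" "m (m (m a b) c) d"] by simp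

lemma mult_leq_add_squares: "x \<in> A \<Longrightarrow> y \<in> A \<Longrightarrow> m x y \<preceq> p (m x x) (m y y)"
  using squares_absorb[of x y] add_commute[of "p (m x x) (m y y)" "m x y"] by simp

lemma fold1_mult_remove1:
  assumes "x \<in> set w" "set w \<subseteq> A" "remove1 x w \<noteq> []"
  shows "fold1 m w = m x (fold1 m (remove1 x w))"
  using assms
proof (induction w)
  case (Cons y w)
  show ?case
  proof (cases "y = x")
    case False
    then have x: "x \<in> set w"
      using Cons.prems by simp
    show ?thesis
    proof (cases "remove1 x w = []")
      case True
      then have "w = [x]"
        using x by (cases w) (auto split: if_splits)
      then show ?thesis
        using False Cons.prems by (simp add: mult_commute)
    next
      case rest: False
      then have "fold1 m (y # w) = m y (m x (fold1 m (remove1 x w)))"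
        using Cons x by (cases "w = []") auto
      moreover have "fold1 m (remove1 x w) \<in> A"
        using Cons.prems rest set_remove1_subset[of x w] by auto
      ultimately have "fold1 m (y # w) = m x (m y (fold1 m (remove1 x w)))"
        using Cons.prems x by (metis mult_assoc mult_commute insert_subset list.set(2) subsetD)
      then show ?thesis
        using False rest by simp
    qed
  qed (use Cons.prems in simp)
qed simp

lemma fold1_mult_mset_eq:
  assumes "mset u = mset w" "w \<noteq> []" "set w \<subseteq> A"
  shows "fold1 m u = fold1 m w"
  using assms
proof (induction u arbitrary: w)
  case (Cons x u)
  have x: "x \<in> set w"
    using mset_eq_setD[OF Cons.prems(1)] by auto
  show ?case
  proof (cases "u = []")
    case True
    then have "mset w = {#x#}"
      using Cons.prems(1) by simp
    then show ?thesis
      using True by simp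
  next
    case False
    have "mset u = mset (remove1 x w)"
      by (simp add: mset_remove1 flip: Cons.prems(1))
    moreover from this have "remove1 x w \<noteq> []"
      using False by (metis mset_zero_iff)
    moreover have "set (remove1 x w) \<subseteq> A"
      using Cons.prems(3) set_remove1_subset[of x w] by blast
    ultimately have "fold1 m u = fold1 m (remove1 x w)"
      by (rule Cons.IH)
    then show ?thesis
      using False fold1_mult_remove1[OF x Cons.prems(3) \<open>remove1 x w \<noteq> []\<close>] by simp
  qed
qed simp

lemma long_word_absorb:
  assumes "3 \<le> length u" "set u \<subseteq> A" "y \<in> A"
  shows "m (fold1 m u) y \<preceq> fold1 m u"
proof -
  obtain a b c r where u: "u = a # b # c # r"
    using assms(1) by (auto simp: numeral_3_eq_3 Suc_le_length_iff)
  then have "fold1 m u = m (m a b) (fold1 m (c # r))"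
    using assms(2) by (simp add: mult_assoc)
  then show ?thesis
    using triple_absorb[of a b "fold1 m (c # r)" y] assms(2,3) u by simp
qed

text \<open>With \<open>r\<close> the rest of the word: \<open>z\<^sup>2r \<le> zr\<close> by absorption, and
  \<open>zr \<le> z\<^sup>2r + zr = z\<^sup>3r \<le> z\<^sup>2r\<close> by the cube identity and absorption.\<close>

lemma long_word_Cons_member:
  assumes "3 \<le> length u" "z \<in> set u" "set u \<subseteq> A"
  shows "fold1 m (z # u) = fold1 m u"
proof -
  define r where "r = remove1 z u"
  have r: "2 \<le> length r" "set r \<subseteq> A" "z \<in> A"
    using assms set_remove1_subset[of z u] by (auto simp: r_def length_remove1)
  then have "r \<noteq> []"
    by auto
  let ?X = "fold1 m (z # r)" and ?Y = "fold1 m (z # z # r)" and ?Z = "fold1 m (z # z # z # r)"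
  have closed: "?X \<in> A" "?Y \<in> A" "?Z \<in> A" "fold1 m r \<in> A"
    using r \<open>r \<noteq> []\<close> by auto
  have "?Y = m ?X z"
    using r \<open>r \<noteq> []\<close> fold1_mult_mset_eq[of "z # z # r" "(z # r) @ [z]"] fold1_mult_append[of "z # r" "[z]"]
    by simp
  then have YX: "?Y \<preceq> ?X"
    using long_word_absorb[of "z # r" z] r by simp
  have "?Z = m (m (m z z) z) (fold1 m r)"
    using r \<open>r \<noteq> []\<close> by (simp add: mult_assoc)
  also have "\<dots> = p ?Y ?X"
    using r \<open>r \<noteq> []\<close> by (simp add: cube_eq distrib_right mult_assoc)
  finally have XZ: "?X \<preceq> ?Z"
    using closed leq_add_right by simp
  have "?Z = m ?Y z"
    using r \<open>r \<noteq> []\<close> fold1_mult_mset_eq[of "z # z # z # r" "(z # z # r) @ [z]"]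
      fold1_mult_append[of "z # z # r" "[z]"]
    by simp
  then have ZY: "?Z \<preceq> ?Y"
    using long_word_absorb[of "z # z # r" z] r by simp
  have "?Y = ?X"
    using leq_antisym[OF closed(2,1) YX leq_trans[OF closed(1,3,2) XZ ZY]] .
  moreover have "mset u = mset (z # r)" "mset (z # u) = mset (z # z # r)"
    using assms(2) by (simp_all add: r_def)
  ultimately show ?thesis
    using assms(2,3) r fold1_mult_mset_eq[of u "z # r"] fold1_mult_mset_eq[of "z # u" "z # z # r"] by simp
qed

lemma long_word_append_subset:
  assumes "3 \<le> length u" "set ys \<subseteq> set u" "set u \<subseteq> A"
  shows "fold1 m (ys @ u) = fold1 m u"
  using assms(2)
proof (induction ys)
  case (Cons y ys)
  then have "fold1 m (y # ys @ u) = fold1 m (ys @ u)"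
    using assms by (intro long_word_Cons_member) auto
  then show ?case
    using Cons by simp
qed simp

lemma long_word_leq:
  assumes "3 \<le> length w" "3 \<le> length u" "set u \<subseteq> set w" "set w \<subseteq> A"
  shows "fold1 m w \<preceq> fold1 m u"
proof -
  have "fold1 m w = fold1 m (u @ w)"
    using assms long_word_append_subset[of w u] by simp
  also have "\<dots> = m (fold1 m u) (fold1 m w)"
    using assms by (intro fold1_mult_append) auto
  moreover have "fold1 m w \<in> A"
    using assms by (intro fold1_mult_closed) auto
  ultimately show ?thesis
    using assms long_word_absorb[of u "fold1 m w"] by auto
qed

lemma long_word_eq:
  assumes "3 \<le> length w" "3 \<le> length u" "set u = set w" "set w \<subseteq> A"
  shows "fold1 m u = fold1 m w"
proof (rule leq_antisym)
  show "fold1 m u \<in> A" "fold1 m w \<in> A"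
    using assms by (auto intro!: fold1_mult_closed)
qed (use assms long_word_leq[of w u] long_word_leq[of u w] in auto)

lemma leq_cube: "x \<in> A \<Longrightarrow> x \<preceq> m x (m x x)"
  using cube_eq[of x] mult_commute[of x "m x x"] leq_add_right[of "m x x" x] by simp

lemma mult_leq_square_mult:
  assumes "x \<in> A" "y \<in> A"
  shows "m x y \<preceq> m x (m x y)"
proof -
  have "m (m (m x x) x) y = p (m x (m x y)) (m x y)"
    using assms by (simp add: cube_eq distrib_right mult_assoc)
  then have "m x y \<preceq> m (m (m x x) x) y"
    using assms leq_add_right by simp
  moreover have "m (m (m x x) x) y = m (m x (m x y)) x"
    using assms fold1_mult_mset_eq[of "[x, x, x, y]" "[x, x, y, x]"] by (simp add: mult_assoc)
  moreover have "m (m x (m x y)) x \<preceq> m x (m x y)"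
    using assms long_word_absorb[of "[x, x, y]" x] by simp
  ultimately show ?thesis
    using assms leq_trans[of "m x y" "m (m (m x x) x) y" "m x (m x y)"] by simp
qed

lemma word_leq_triple:
  assumes "w \<noteq> []" "set w \<subseteq> A"
  shows "fold1 m w \<preceq> fold1 m (w @ w @ w)"
  using assms(1)
proof (cases rule: word_cases)
  case (1 x)
  then show ?thesis
    using assms leq_cube by simp
next
  case (2 x y)
  then have "fold1 m (w @ w @ w) = fold1 m [x, x, y]"
    using assms by (intro long_word_eq) auto
  then show ?thesis
    using 2 assms mult_leq_square_mult by simp
next
  case 3
  then have "fold1 m (w @ w @ w) = fold1 m w"
    using assms by (intro long_word_eq) auto
  then show ?thesis
    using assms by simp
qed

lemma word_leq_long_word:
  assumes "3 \<le> length u" "set u \<subseteq> set w" "w \<noteq> []" "set w \<subseteq> A"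
  shows "fold1 m w \<preceq> fold1 m u"
proof -
  have "3 \<le> length (w @ w @ w)"
    using assms(3) by (cases w) auto
  then have "fold1 m (w @ w @ w) \<preceq> fold1 m u"
    using assms by (intro long_word_leq) auto
  moreover have "fold1 m w \<preceq> fold1 m (w @ w @ w)"
    using assms(3,4) by (rule word_leq_triple)
  moreover have "fold1 m u \<in> A" "fold1 m (w @ w @ w) \<in> A"
    using assms by (auto intro!: fold1_mult_closed)
  ultimately show ?thesis
    using assms(3,4) leq_trans[of "fold1 m w" "fold1 m (w @ w @ w)" "fold1 m u"] by simp
qed

lemma covered_leq_two_monomials:
  assumes "covered M w" "\<And>u. u \<in> M \<Longrightarrow> u \<noteq> [] \<and> set u \<subseteq> A" "w \<noteq> []" "set w \<subseteq> A"
  obtains u1 u2 where "u1 \<in> M" "u2 \<in> M" "fold1 m w \<preceq> p (fold1 m u1) (fold1 m u2)"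
  using assms(1)
proof cases
  case (perm u)
  then have "fold1 m w = fold1 m u"
    using assms(2) by (intro fold1_mult_mset_eq) auto
  then show ?thesis
    using that[of u u] perm assms(2) by simp
next
  case (long u)
  then have "fold1 m w \<preceq> fold1 m u"
    using assms(2-4) by (intro word_leq_long_word) auto
  then show ?thesis
    using that[of u u] long assms(2) by simp
next
  case (linear x q y)
  have xy: "x \<in> A" "y \<in> A"
    using linear assms(4) by auto
  have "fold1 m w \<preceq> fold1 m [x, x, y]"
    using linear assms(3,4) by (intro word_leq_long_word) auto
  moreover have "fold1 m [x, x, y] \<preceq> p x (m x y)"
    using xy add_mult_eq[of x y] leq_add_right[of x "m x (m x y)"] by (simp add: mult_assoc)
  moreover have "fold1 m q = m x y"
    using linear xy fold1_mult_mset_eq[of q "[x, y]"] by simp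
  ultimately show ?thesis
    using that[of "[x]" q] linear xy assms(3,4) leq_trans[of "fold1 m w" "fold1 m [x, x, y]"] by simp
next
  case (squares x y)
  have "set w = {x, y}"
    using arg_cong[OF squares(3), of set_mset] by simp
  then have xy: "x \<in> A" "y \<in> A"
    using assms(4) by auto
  have "fold1 m w = m x y"
    using squares xy fold1_mult_mset_eq[of w "[x, y]"] by simp
  then show ?thesis
    using that[of "[x, x]" "[y, y]"] squares xy mult_leq_add_squares by simp
qed

lemma covered_leq_eval:
  assumes "covered (set (monomials t)) w" "set_tm t \<subseteq> A" "w \<noteq> []" "set w \<subseteq> A"
  shows "fold1 m w \<preceq> eval_tm p m id t"
proof -
  have monomials_A: "u \<noteq> [] \<and> set u \<subseteq> A" if "u \<in> set (monomials t)" for u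
    using monomial_nonempty[OF that] assms(2) by auto
  obtain u1 u2 where u: "u1 \<in> set (monomials t)" "u2 \<in> set (monomials t)"
    and w_leq: "fold1 m w \<preceq> p (fold1 m u1) (fold1 m u2)"
    using covered_leq_two_monomials[OF assms(1) monomials_A assms(3,4)] by blast
  have "p (fold1 m u1) (fold1 m u2) \<preceq> eval_tm p m id t"
    using u monomials_A monomial_leq_eval[of id t] assms(2) eval_closed[of id t] by (intro add_leq) auto
  then show ?thesis
    using w_leq u monomials_A assms eval_closed[of id t]
      leq_trans[of "fold1 m w" "p (fold1 m u1) (fold1 m u2)" "eval_tm p m id t"]
    by simp
qed

lemma eval_leq_if_S_leq:
  assumes "set_tm t \<subseteq> A" "set_tm u \<subseteq> A"
    and S_leq: "\<And>v. add4 (eval_tm add4 mul4 v t) (eval_tm add4 mul4 v u) = eval_tm add4 mul4 v u"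
  shows "eval_tm p m id t \<preceq> eval_tm p m id u"
proof -
  have "fold1 m w \<preceq> eval_tm p m id u" if w: "w \<in> set (monomials t)" for w
  proof -
    have "S_below w u"
      unfolding S_below_def
    proof
      fix v
      show "add4 (fold1 mul4 (map v w)) (eval_tm add4 mul4 v u) = eval_tm add4 mul4 v u"
        using S.monomial_leq_eval[of v t w] w S_leq[of v]
          S.leq_trans[of "fold1 mul4 (map v w)" "eval_tm add4 mul4 v t" "eval_tm add4 mul4 v u"]
        by simp
    qed
    then show ?thesis
      using w monomial_nonempty[OF w] assms(1,2)
      by (intro covered_leq_eval covered_if_S_below) auto
  qed
  then show ?thesis
    using assms(1,2) eval_leq_iff[of id t "eval_tm p m id u"] eval_closed[of id u] by simp
qed

lemma S_identity_holds:
  assumes "identity_holds UNIV add4 mul4 t u"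
  shows "identity_holds A p m t u"
  unfolding identity_holds_def
proof (intro allI impI)
  fix e
  assume e: "e ` (set_tm t \<union> set_tm u) \<subseteq> A"
  have S_eq: "eval_tm add4 mul4 v (map_tm e t) = eval_tm add4 mul4 v (map_tm e u)" for v
    using assms by (simp add: identity_holds_def eval_map_tm)
  have "set_tm (map_tm e t) \<subseteq> A" "set_tm (map_tm e u) \<subseteq> A"
    using e by (auto simp: tm.set_map)
  then have "eval_tm p m id (map_tm e t) = eval_tm p m id (map_tm e u)"
    using S_eq eval_closed[of id] eval_leq_if_S_leq[of "map_tm e t" "map_tm e u"]
      eval_leq_if_S_leq[of "map_tm e u" "map_tm e t"]
    by (intro leq_antisym[of "eval_tm p m id (map_tm e t)" "eval_tm p m id (map_tm e u)"])
      (simp_all add: S.add_idem)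
  then show "eval_tm p m e t = eval_tm p m e u"
    by (simp add: eval_map_tm)
qed

end

section \<open>The variety generated by S_(4,430)\<close>

lemma identity_holds_if_in_V_S4:
  assumes "in_V_S4 A p m" and S_identity: "identity_holds UNIV add4 mul4 t u"
  shows "identity_holds A p m t u"
  unfolding identity_holds_def
proof (intro allI impI)
  obtain B :: "(('a \<Rightarrow> s4) \<Rightarrow> s4) set" and h where
    closed: "\<forall>f\<in>B. \<forall>g\<in>B. (\<lambda>j. add4 (f j) (g j)) \<in> B \<and> (\<lambda>j. mul4 (f j) (g j)) \<in> B" and
    onto: "h ` B = A" and
    hom: "\<forall>f\<in>B. \<forall>g\<in>B. h (\<lambda>j. add4 (f j) (g j)) = p (h f) (h g) \<and>
                       h (\<lambda>j. mul4 (f j) (g j)) = m (h f) (h g)"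
    using assms(1) unfolding in_V_S4_def by blast
  let ?V = "set_tm t \<union> set_tm u"
  fix e
  assume "e ` ?V \<subseteq> A"
  then have "\<forall>x\<in>?V. \<exists>F\<in>B. h F = e x"
    using onto by (metis image_iff image_subset_iff)
  then obtain f where f: "\<And>x. x \<in> ?V \<Longrightarrow> f x \<in> B \<and> h (f x) = e x"
    using bchoice[of ?V] by metis
  define lift where "lift s = (\<lambda>j. eval_tm add4 mul4 (\<lambda>x. f x j) s)" for s
  have lift: "lift s \<in> B \<and> h (lift s) = eval_tm p m e s" if "set_tm s \<subseteq> ?V" for s
    using that
  proof (induction s)
    case (Var x)
    then show ?case
      using f[of x] by (simp add: lift_def)
  next
    case (Add a b)
    then show ?case
      using closed hom by (simp add: lift_def)
  next
    case (Mul a b)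
    then show ?case
      using closed hom by (simp add: lift_def)
  qed
  have "lift t = lift u"
    using S_identity unfolding lift_def identity_holds_def by simp
  then show "eval_tm p m e t = eval_tm p m e u"
    using lift[of t] lift[of u] by simp
qed

definition S_term_fun :: "'v tm \<Rightarrow> ('v \<Rightarrow> s4) \<Rightarrow> s4" where
  "S_term_fun t = (\<lambda>v. eval_tm add4 mul4 v t)"

lemma identity_holds_S_iff: "identity_holds UNIV add4 mul4 t u \<longleftrightarrow> S_term_fun t = S_term_fun u"
  by (simp add: identity_holds_def S_term_fun_def fun_eq_iff)

lemma eval_SOME_S_term_fun:
  fixes A :: "'a set" and t :: "'a tm"
  assumes identities: "\<And>t u :: 'a tm. identity_holds UNIV add4 mul4 t u \<Longrightarrow> identity_holds A p m t u"
    and t: "set_tm t \<subseteq> A"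
  shows "eval_tm p m id (SOME t'. set_tm t' \<subseteq> A \<and> S_term_fun t' = S_term_fun t) = eval_tm p m id t"
    (is "eval_tm p m id ?t' = _")
proof -
  have t': "set_tm ?t' \<subseteq> A" "S_term_fun ?t' = S_term_fun t"
    using someI[of "\<lambda>t'. set_tm t' \<subseteq> A \<and> S_term_fun t' = S_term_fun t" t] t by auto
  then have "identity_holds A p m ?t' t"
    by (intro identities) (simp add: identity_holds_S_iff)
  then show ?thesis
    using t t'(1) unfolding identity_holds_def by simp
qed

text \<open>\<open>B\<close> is the algebra of S_(4,430)-term functions in the variables \<open>A\<close>, and \<open>h\<close> evaluates a
  representing term in \<open>A\<close>; this is well defined because \<open>A\<close> satisfies the identities of S_(4,430).\<close>

lemma in_V_S4_if_identities_hold: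
  fixes A :: "'a set"
  assumes closed: "\<forall>x\<in>A. \<forall>y\<in>A. p x y \<in> A \<and> m x y \<in> A"
    and identities: "\<And>t u :: 'a tm. identity_holds UNIV add4 mul4 t u \<Longrightarrow> identity_holds A p m t u"
  shows "in_V_S4 A p m"
proof -
  define B where "B = S_term_fun ` {t. set_tm t \<subseteq> A}"
  define h where "h F = eval_tm p m id (SOME t. set_tm t \<subseteq> A \<and> S_term_fun t = F)" for F
  have h_S_term_fun: "h (S_term_fun t) = eval_tm p m id t" if "set_tm t \<subseteq> A" for t
    unfolding h_def using identities that by (rule eval_SOME_S_term_fun)
  have eval_A: "eval_tm p m id t \<in> A" if "set_tm t \<subseteq> A" for t
    using that closed by (induction t) auto
  show ?thesis
    unfolding in_V_S4_def
  proof (intro exI[of _ B] exI[of _ h] conjI ballI)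
    fix f g
    assume "f \<in> B" "g \<in> B"
    then obtain a b where ab: "set_tm a \<subseteq> A" "set_tm b \<subseteq> A" "f = S_term_fun a" "g = S_term_fun b"
      unfolding B_def by blast
    have Add: "(\<lambda>j. add4 (f j) (g j)) = S_term_fun (Add a b)"
      and Mul: "(\<lambda>j. mul4 (f j) (g j)) = S_term_fun (Mul a b)"
      by (simp_all add: ab(3,4) S_term_fun_def)
    show "(\<lambda>j. add4 (f j) (g j)) \<in> B" "(\<lambda>j. mul4 (f j) (g j)) \<in> B"
      unfolding Add Mul B_def using ab(1,2) by auto
    show "h (\<lambda>j. add4 (f j) (g j)) = p (h f) (h g)" "h (\<lambda>j. mul4 (f j) (g j)) = m (h f) (h g)"
      unfolding Add Mul using ab by (simp_all add: h_S_term_fun)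
  next
    have "x \<in> h ` B" if "x \<in> A" for x
    proof
      show "x = h (S_term_fun (Var x))"
        using that h_S_term_fun[of "Var x"] by simp
      show "S_term_fun (Var x) \<in> B"
        using that unfolding B_def by simp
    qed
    then show "h ` B = A"
      unfolding B_def using eval_A h_S_term_fun by auto
  qed
qed

definition Sigma_identities :: "(nat tm \<times> nat tm) list" where
  "Sigma_identities =
     [(Mul (Var 0) (Var 1), Mul (Var 1) (Var 0)),
      (Mul (Mul (Mul (Var 0) (Var 0)) (Var 0)) (Var 0), Mul (Mul (Var 0) (Var 0)) (Var 0)),
      (Mul (Mul (Var 0) (Var 0)) (Var 0), Add (Mul (Var 0) (Var 0)) (Var 0)),
      (Add (Var 0) (Mul (Var 0) (Var 1)), Add (Var 0) (Mul (Mul (Var 0) (Var 0)) (Var 1))),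
      (Add (Mul (Var 0) (Var 0)) (Mul (Var 1) (Var 1)),
       Add (Add (Mul (Var 0) (Var 0)) (Mul (Var 1) (Var 1))) (Mul (Var 0) (Var 1))),
      (Mul (Mul (Var 0) (Var 1)) (Var 2),
       Add (Mul (Mul (Var 0) (Var 1)) (Var 2)) (Mul (Mul (Mul (Var 0) (Var 1)) (Var 2)) (Var 3)))]"

lemma satisfies_Sigma_if_identities_hold:
  assumes identities: "\<forall>(t, u) \<in> set Sigma_identities. identity_holds A p m t u"
  shows "satisfies_Sigma A p m"
proof -
  have identity_instance: "eval_tm p m ((!) xs) t = eval_tm p m ((!) xs) u"
    if "Sigma_identities ! k = (t, u)" "k < length Sigma_identities" "set xs \<subseteq> A"
      "set_tm t \<union> set_tm u \<subseteq> {..<length xs}" for k t u xs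
  proof -
    have "(!) xs ` (set_tm t \<union> set_tm u) \<subseteq> A"
      using that(3,4) nth_mem by fastforce
    moreover have "(t, u) \<in> set Sigma_identities"
      using that(1,2) nth_mem by metis
    ultimately show ?thesis
      using identities unfolding identity_holds_def by blast
  qed
  show ?thesis
    unfolding satisfies_Sigma_def
  proof (intro conjI ballI)
    fix x y assume "x \<in> A" "y \<in> A"
    then show "m x y = m y x" "p x (m x y) = p x (m (m x x) y)"
      "p (m x x) (m y y) = p (p (m x x) (m y y)) (m x y)"
      using identity_instance[of 0 _ _ "[x, y]"] identity_instance[of 3 _ _ "[x, y]"]
        identity_instance[of 4 _ _ "[x, y]"]
      by (simp_all add: Sigma_identities_def)
  next
    fix x assume "x \<in> A"
    then show "m (m (m x x) x) x = m (m x x) x" "m (m x x) x = p (m x x) x"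
      using identity_instance[of 1 _ _ "[x]"] identity_instance[of 2 _ _ "[x]"]
      by (simp_all add: Sigma_identities_def)
  next
    fix x1 x2 x3 x4 assume "x1 \<in> A" "x2 \<in> A" "x3 \<in> A" "x4 \<in> A"
    then show "m (m x1 x2) x3 = p (m (m x1 x2) x3) (m (m (m x1 x2) x3) x4)"
      using identity_instance[of 5 _ _ "[x1, x2, x3, x4]"] by (simp add: Sigma_identities_def)
  qed
qed

lemma S_satisfies_Sigma_identities:
  "\<forall>(t, u) \<in> set Sigma_identities. identity_holds UNIV add4 mul4 t u"
  unfolding Sigma_identities_def identity_holds_def
  by (auto; case_tac "e 0"; case_tac "e 1"; case_tac "e 2"; case_tac "e 3"; simp)

theorem proposition7p8:
  fixes A :: "'a set" and p m :: "'a \<Rightarrow> 'a \<Rightarrow> 'a"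
  assumes "ai_semiring A p m"
  shows "in_V_S4 A p m \<longleftrightarrow> satisfies_Sigma A p m"
proof
  assume "in_V_S4 A p m"
  then show "satisfies_Sigma A p m"
    using S_satisfies_Sigma_identities identity_holds_if_in_V_S4
    by (intro satisfies_Sigma_if_identities_hold) fast
next
  assume "satisfies_Sigma A p m"
  then interpret sigma_semiring A p m
    using assms by unfold_locales
  show "in_V_S4 A p m"
    using assms S_identity_holds unfolding ai_semiring_def
    by (intro in_V_S4_if_identities_hold) blast+
qed

end
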